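(* Let $W\in\mathbb{R}^{m\times n}$ have nonzero columns $w_1,\dots,w_n$, $F:=WW^\top$, $r:=\operatorname{rank}(W)\ge1$, $\ell_i:=w_i^\top F^+w_i$, $D_i:=\|w_i\|^4/(w_i^\top Fw_i)$ and $\sigma_i:=1-D_i/\ell_i$. Assume $\sum_{i=1}^nD_i\ge(1-\varepsilon)r$. Then for every $\tau\in(0,1)$, $$\frac1r\sum_{i:\sigma_i\ge\tau}\ell_i\le\frac{\varepsilon}{\tau}.$$
   Context: $F^+$ is the Moore–Penrose pseudoinverse of $F$. *)

theory Defs
  imports "HOL-Analysis.Analysis"
begin

definition pseudo_inverse :: "real^'m^'n \<Rightarrow> real^'n^'m" where
  "pseudo_inverse A = (THE X. A ** X ** A = A \<and> X ** A ** X = X \<and>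
       transpose (A ** X) = A ** X \<and> transpose (X ** A) = X ** A)"

end

(*
  Let F = W W^T and X = F^+.  Since the columns of W lie in the range of F, F X w_i = w_i, so with
  a = W^T w_i and b = W^T X w_i one gets |w_i|^2 = <a, b>, w_i^T F w_i = |a|^2 and l_i = |b|^2.
  Cauchy-Schwarz therefore gives D_i <= l_i, i.e. sigma_i >= 0.  Moreover sum_i l_i is the trace of
  X F, the orthogonal projection onto the range of F, hence equals rank F = rank W = r.  Thus
  sum_i l_i sigma_i = sum_i (l_i - D_i) <= eps r, and Markov's inequality for the weights l_i
  bounds the l-mass of {sigma_i >= tau} by eps r / tau.
*)

theory Submission
  imports Defs
begin

lemma inner_matrix_vector_transpose: "(x::real^'m) \<bullet> (A *v y) = (transpose A *v x) \<bullet> y"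
  by (simp add: dot_lmul_matrix)

lemma symmetric_matrixI:
  fixes M :: "real^'n^'n"
  assumes "\<And>x y. x \<bullet> (M *v y) = (M *v x) \<bullet> y"
  shows "transpose M = M"
proof -
  have "(transpose M *v x - M *v x) \<bullet> y = 0" for x y
    using assms[of x y] by (simp add: inner_diff_left inner_matrix_vector_transpose)
  then show ?thesis
    by (metis matrix_eq eq_iff_diff_eq_0 inner_eq_zero_iff)
qed

definition orthonormal :: "'a::real_inner set \<Rightarrow> bool" where
  "orthonormal B \<longleftrightarrow> pairwise orthogonal B \<and> (\<forall>b\<in>B. norm b = 1)"

definition orthogonal_projection :: "'a::real_inner set \<Rightarrow> 'a \<Rightarrow> 'a" where
  "orthogonal_projection B x = (\<Sum>b\<in>B. (x \<bullet> b) *\<^sub>R b)"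

lemma orthonormal_inner:
  assumes "orthonormal B" "b \<in> B" "c \<in> B"
  shows "b \<bullet> c = (if b = c then 1 else 0)"
  using assms by (auto simp: orthonormal_def pairwise_def orthogonal_def dot_square_norm)

lemma linear_orthogonal_projection: "linear (orthogonal_projection B)"
  unfolding orthogonal_projection_def
  by (rule linearI) (simp_all add: inner_add_left scaleR_add_left sum.distrib scaleR_sum_right)

lemma orthogonal_projection_in_span: "orthogonal_projection B x \<in> span B"
  unfolding orthogonal_projection_def by (intro span_sum span_scale span_base)

lemma inner_orthogonal_projection_commute:
  "x \<bullet> orthogonal_projection B y = orthogonal_projection B x \<bullet> y"
  unfolding orthogonal_projection_def
  by (simp add: inner_sum_right inner_sum_left inner_commute mult.commute)

lemma orthogonal_projection_residual_orthogonal: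
  assumes "finite B" "orthonormal B" "v \<in> span B"
  shows "(x - orthogonal_projection B x) \<bullet> v = 0"
proof -
  have "orthogonal (x - orthogonal_projection B x) c" if "c \<in> B" for c
  proof -
    have "orthogonal_projection B x \<bullet> c = (\<Sum>b\<in>B. (x \<bullet> b) * (b \<bullet> c))"
      unfolding orthogonal_projection_def by (simp add: inner_sum_left)
    also have "\<dots> = x \<bullet> c"
      using assms(1,2) that by (simp add: orthonormal_inner if_distrib cong: if_cong)
    finally show ?thesis by (simp add: orthogonal_def inner_diff_left)
  qed
  then show ?thesis
    using orthogonal_to_span[OF assms(3)] by (simp add: orthogonal_def)
qed

lemma orthogonal_projection_fixes_span:
  assumes "finite B" "orthonormal B" "v \<in> span B"
  shows "orthogonal_projection B v = v"
proof -
  have "v - orthogonal_projection B v \<in> span B"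
    using assms(3) orthogonal_projection_in_span by (rule span_diff)
  then have "(v - orthogonal_projection B v) \<bullet> (v - orthogonal_projection B v) = 0"
    by (rule orthogonal_projection_residual_orthogonal[OF assms(1,2)])
  then show ?thesis by simp
qed

lemma trace_matrix_orthogonal_projection:
  fixes B :: "(real^'n) set"
  assumes "finite B" "orthonormal B"
  shows "trace (matrix (orthogonal_projection B)) = real (card B)"
proof -
  have "trace (matrix (orthogonal_projection B)) = (\<Sum>k\<in>UNIV. \<Sum>b\<in>B. b $ k * b $ k)"
    by (simp add: trace_def matrix_def orthogonal_projection_def inner_axis' sum_component)
  also have "\<dots> = (\<Sum>b\<in>B. b \<bullet> b)"
    by (subst sum.swap) (simp add: inner_vec_def)
  also have "\<dots> = real (card B)"
    using assms(2) by (simp add: orthonormal_inner)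
  finally show ?thesis .
qed

lemma orthogonal_projection_onto_subspace:
  fixes V :: "(real^'n) set"
  assumes "subspace V"
  obtains P where "linear P" "\<And>y. P y \<in> V" "\<And>v. v \<in> V \<Longrightarrow> P v = v"
    "\<And>y v. v \<in> V \<Longrightarrow> (y - P y) \<bullet> v = 0"
    "transpose (matrix P) = matrix P" "trace (matrix P) = real (dim V)"
proof -
  obtain B where B: "pairwise orthogonal B" "\<And>b. b \<in> B \<Longrightarrow> norm b = 1"
      "independent B" "card B = dim V" "span B = V"
    using orthonormal_basis_subspace[OF assms] by blast
  have finite: "finite B" and orthonormal: "orthonormal B"
    using B by (auto simp: orthonormal_def finiteI_independent)
  have matrix_P: "matrix (orthogonal_projection B) *v y = orthogonal_projection B y" for y
    using linear_orthogonal_projection[of B] by (simp add: matrix_works linear_matrix_vector_mul_eq)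
  show thesis
  proof
    show "transpose (matrix (orthogonal_projection B)) = matrix (orthogonal_projection B)"
      by (rule symmetric_matrixI) (metis matrix_P inner_orthogonal_projection_commute)
  qed (use B(4,5) orthogonal_projection_in_span orthogonal_projection_fixes_span[OF finite orthonormal]
      orthogonal_projection_residual_orthogonal[OF finite orthonormal]
      trace_matrix_orthogonal_projection[OF finite orthonormal] linear_orthogonal_projection in auto)
qed

definition is_pseudo_inverse :: "real^'m^'n \<Rightarrow> real^'n^'m \<Rightarrow> bool" where
  "is_pseudo_inverse A X \<longleftrightarrow> A ** X ** A = A \<and> X ** A ** X = X \<and>
     transpose (A ** X) = A ** X \<and> transpose (X ** A) = X ** A"

lemma is_pseudo_inverse_unique:
  assumes "is_pseudo_inverse A X" "is_pseudo_inverse A Y"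
  shows "X = Y"
proof -
  note X = assms(1)[unfolded is_pseudo_inverse_def] and Y = assms(2)[unfolded is_pseudo_inverse_def]
  have "X = X ** transpose (A ** X)" using X by (simp add: matrix_mul_assoc)
  also have "\<dots> = X ** transpose X ** transpose (A ** Y ** A)"
    using Y by (simp add: matrix_transpose_mul matrix_mul_assoc)
  also have "\<dots> = X ** transpose (A ** X) ** transpose (A ** Y)"
    by (simp add: matrix_transpose_mul matrix_mul_assoc)
  also have "\<dots> = X ** A ** Y"
    using X Y by (metis matrix_mul_assoc)
  finally have XAY: "X = X ** A ** Y" .
  have "Y = transpose (Y ** A) ** Y" using Y by (simp add: matrix_mul_assoc)
  also have "\<dots> = transpose (A ** X ** A) ** transpose Y ** Y"
    using X by (simp add: matrix_transpose_mul)
  also have "\<dots> = transpose (X ** A) ** transpose (Y ** A) ** Y"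
    by (simp add: matrix_transpose_mul matrix_mul_assoc)
  also have "\<dots> = X ** A ** Y"
    using X Y by (metis matrix_mul_assoc)
  finally show ?thesis using XAY by simp
qed

lemma pseudo_inverse_eqI: "is_pseudo_inverse A X \<Longrightarrow> pseudo_inverse A = X"
  unfolding pseudo_inverse_def is_pseudo_inverse_def[symmetric]
  using is_pseudo_inverse_unique by blast

lemma symmetric_matrix_vanishes_on_range_complement:
  fixes F :: "real^'n^'n"
  assumes "transpose F = F" "\<And>y. z \<bullet> (F *v y) = 0"
  shows "F *v z = 0"
proof -
  have "(F *v z) \<bullet> (F *v z) = z \<bullet> (F *v (F *v z))"
    using assms(1) by (metis inner_matrix_vector_transpose)
  then show ?thesis using assms(2) by simp
qed

lemma symmetric_matrix_inj_on_range:
  fixes F :: "real^'n^'n"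
  assumes "transpose F = F"
  shows "inj_on ((*v) F) (range ((*v) F))"
proof (rule inj_onI)
  fix u v assume "u \<in> range ((*v) F)" "v \<in> range ((*v) F)" "F *v u = F *v v"
  then obtain a b where "u = F *v a" "v = F *v b" "F *v (u - v) = 0"
    by (auto simp: matrix_vector_mult_diff_distrib)
  then have "(u - v) \<bullet> (u - v) = 0"
    using assms by (metis inner_matrix_vector_transpose inner_zero_left matrix_vector_mult_diff_distrib)
  then show "u = v" by simp
qed

lemma symmetric_matrix_has_pseudo_inverse:
  fixes F :: "real^'n^'n"
  assumes sym: "transpose F = F"
  obtains X where "is_pseudo_inverse F X" "trace (X ** F) = real (rank F)"
proof -
  define V where "V = range ((*v) F)"
  have "subspace V"
    unfolding V_def by (simp add: subspace_UNIV linear_subspace_image)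
  obtain P where P: "linear P" "\<And>y. P y \<in> V" "\<And>v. v \<in> V \<Longrightarrow> P v = v"
      "\<And>y v. v \<in> V \<Longrightarrow> (y - P y) \<bullet> v = 0"
      "transpose (matrix P) = matrix P" "trace (matrix P) = real (dim V)"
    using orthogonal_projection_onto_subspace[OF \<open>subspace V\<close>] by blast
  have matrix_P: "matrix P *v y = P y" for y
    using P(1) by (simp add: matrix_works linear_matrix_vector_mul_eq)
  have F_P: "F *v P y = F *v y" for y
  proof -
    have "F *v (y - P y) = 0"
      using sym P(4) unfolding V_def by (blast intro: symmetric_matrix_vanishes_on_range_complement)
    then show ?thesis by (simp add: matrix_vector_mult_diff_distrib)
  qed
  obtain g where g: "range g \<subseteq> V" "linear g" "\<And>v. v \<in> V \<Longrightarrow> g (F *v v) = v"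
    using vec.linear_exists_left_inverse_on[of "(*v) F" V] symmetric_matrix_inj_on_range[OF sym]
      \<open>subspace V\<close> unfolding V_def
    by (auto simp: linear_matrix_vector_mul_eq subspace_vec_eq)
  \<comment> \<open>X inverts F on its range V and vanishes on the orthogonal complement, so FX = XF = P.\<close>
  define X where "X = matrix (g \<circ> P)"
  have X: "X *v y = g (P y)" for y
    unfolding X_def using linear_compose[OF P(1) g(2)]
    by (simp add: matrix_works linear_matrix_vector_mul_eq)
  have FX: "F ** X = matrix P"
  proof -
    have "F *v g (P y) = P y" for y
    proof -
      obtain u where "P y = F *v u" using P(2) unfolding V_def by blast
      then show ?thesis using F_P g(3)[OF P(2)] by metis
    qed
    then show ?thesis by (simp add: matrix_eq matrix_P X flip: matrix_vector_mul_assoc)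
  qed
  have XF: "X ** F = matrix P"
    using g(3)[OF P(2)] P(3) F_P
    by (simp add: matrix_eq matrix_P X V_def flip: matrix_vector_mul_assoc)
  have "is_pseudo_inverse F X"
    unfolding is_pseudo_inverse_def
  proof (intro conjI)
    show "F ** X ** F = F"
      using P(3) by (simp add: FX matrix_eq matrix_P V_def flip: matrix_vector_mul_assoc)
    show "X ** F ** X = X"
      using P(3) g(1) by (auto simp: XF matrix_eq matrix_P X simp flip: matrix_vector_mul_assoc)
  qed (simp_all add: FX XF P(5))
  moreover have "trace (X ** F) = real (rank F)"
    using P(6) by (simp add: XF rank_dim_range V_def)
  ultimately show thesis by (rule that)
qed

lemma pseudo_inverse_symmetric:
  fixes F :: "real^'n^'n"
  assumes "transpose F = F"
  shows "is_pseudo_inverse F (pseudo_inverse F)" "trace (pseudo_inverse F ** F) = real (rank F)"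
  using symmetric_matrix_has_pseudo_inverse[OF assms] pseudo_inverse_eqI by metis+

lemma range_gram_matrix:
  fixes W :: "real^'n^'m"
  shows "range ((*v) (W ** transpose W)) = range ((*v) W)"
proof
  show "range ((*v) (W ** transpose W)) \<subseteq> range ((*v) W)"
    by (auto simp flip: matrix_vector_mul_assoc)
  show "range ((*v) W) \<subseteq> range ((*v) (W ** transpose W))"
  proof clarify
    fix x
    define R where "R = range ((*v) (transpose W))"
    obtain x1 x2 where x12: "x1 \<in> span R" "\<And>v. v \<in> span R \<Longrightarrow> orthogonal x2 v" "x = x1 + x2"
      using orthogonal_subspace_decomp_exists[of R x] by blast
    have "span R = R"
      unfolding R_def span_eq_iff
      by (intro linear_subspace_image subspace_UNIV matrix_vector_mul_linear)
    then obtain u where "x1 = transpose W *v u"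
      using x12(1) unfolding R_def by blast
    have "x2 \<bullet> (transpose W *v v) = 0" for v
      using x12(2)[OF span_base, of "transpose W *v v"] unfolding R_def orthogonal_def by blast
    then have "(W *v x2) \<bullet> v = 0" for v
      by (metis inner_commute inner_matrix_vector_transpose transpose_transpose)
    then have "W *v x2 = 0"
      by (metis inner_eq_zero_iff)
    then have "W *v x = (W ** transpose W) *v u"
      using x12(3) \<open>x1 = transpose W *v u\<close>
      by (metis add.right_neutral matrix_vector_mul_assoc matrix_vector_right_distrib)
    then show "W *v x \<in> range ((*v) (W ** transpose W))" by simp
  qed
qed

lemma rank_gram_matrix: "rank (W ** transpose W) = rank (W :: real^'n^'m)"
  by (simp add: rank_dim_range range_gram_matrix)

lemma transpose_gram_matrix: "transpose (W ** transpose W) = (W ** transpose W :: real^'m^'m)"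
  by (simp add: matrix_transpose_mul)

lemma gram_quadratic_form_nonneg:
  fixes W :: "real^'n^'m"
  shows "0 \<le> w \<bullet> ((W ** transpose W) *v w)"
  by (simp add: inner_matrix_vector_transpose flip: matrix_vector_mul_assoc)

lemma sum_column_quadratic_forms:
  fixes W :: "real^'n^'m" and X :: "real^'m^'m"
  shows "(\<Sum>i\<in>UNIV. column i W \<bullet> (X *v column i W)) = trace (X ** (W ** transpose W))"
proof -
  have "column i W \<bullet> (X *v column i W) = (transpose W ** (X ** W)) $ i $ i" for i
  proof -
    have "X *v column i W = column i (X ** W)"
      by (simp add: matrix_vector_mult_basis[symmetric] matrix_vector_mul_assoc)
    then show ?thesis
      by (simp add: matrix_matrix_mult_def transpose_def inner_vec_def column_def)
  qed
  then have "(\<Sum>i\<in>UNIV. column i W \<bullet> (X *v column i W)) = trace (transpose W ** (X ** W))"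
    by (simp add: trace_def)
  also have "\<dots> = trace (X ** (W ** transpose W))"
    by (metis trace_mul_sym matrix_mul_assoc)
  finally show ?thesis .
qed

lemma norm_pow4_le_gram_quadratic_forms:
  fixes W :: "real^'n^'m" and X :: "real^'m^'m"
  assumes "(W ** transpose W) *v (X *v w) = w"
  shows "norm w ^ 4 \<le> (w \<bullet> ((W ** transpose W) *v w)) * (w \<bullet> (X *v w))"
proof -
  define a where "a = transpose W *v w"
  define b where "b = transpose W *v (X *v w)"
  have "w \<bullet> w = a \<bullet> b"
    using assms inner_matrix_vector_transpose[of w W]
    by (metis a_def b_def matrix_vector_mul_assoc)
  moreover have "w \<bullet> ((W ** transpose W) *v w) = a \<bullet> a"
    by (simp add: a_def inner_matrix_vector_transpose flip: matrix_vector_mul_assoc)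
  moreover have "w \<bullet> (X *v w) = b \<bullet> b"
    using assms inner_matrix_vector_transpose[of "X *v w" W]
    by (metis b_def inner_commute matrix_vector_mul_assoc)
  moreover have "norm w ^ 4 = (w \<bullet> w)\<^sup>2"
    by (simp add: power2_norm_eq_inner[symmetric] flip: power_mult)
  ultimately show ?thesis
    using Cauchy_Schwarz_ineq[of a b] by simp
qed

lemma gram_defect_bounds:
  fixes W :: "real^'n^'m" and X :: "real^'m^'m"
  assumes "(W ** transpose W) *v (X *v w) = w" "w \<noteq> 0"
  shows "0 < norm w ^ 4 / (w \<bullet> ((W ** transpose W) *v w))"
    and "norm w ^ 4 / (w \<bullet> ((W ** transpose W) *v w)) \<le> w \<bullet> (X *v w)"
proof -
  have norm_pos: "0 < norm w ^ 4"
    using assms(2) by simp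
  note cs = norm_pow4_le_gram_quadratic_forms[OF assms(1)]
  have "0 < w \<bullet> ((W ** transpose W) *v w)"
    using gram_quadratic_form_nonneg[of w W] norm_pos cs
    by (metis less_eq_real_def mult_eq_0_iff not_less)
  then show "0 < norm w ^ 4 / (w \<bullet> ((W ** transpose W) *v w))"
    and "norm w ^ 4 / (w \<bullet> ((W ** transpose W) *v w)) \<le> w \<bullet> (X *v w)"
    using norm_pos cs by (simp_all add: pos_divide_le_eq mult.commute)
qed

lemma gram_pseudo_inverse_cancel_column:
  fixes W :: "real^'n^'m"
  shows "(W ** transpose W) *v (pseudo_inverse (W ** transpose W) *v column i W) = column i W"
proof -
  have "column i W \<in> range ((*v) (W ** transpose W))"
    unfolding range_gram_matrix matrix_vector_mult_basis[symmetric] by (rule rangeI)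
  then obtain u where u: "column i W = (W ** transpose W) *v u" by blast
  show ?thesis
    using pseudo_inverse_symmetric(1)[OF transpose_gram_matrix] unfolding u is_pseudo_inverse_def
    by (metis matrix_vector_mul_assoc)
qed

lemma sum_leverage_scores:
  fixes W :: "real^'n^'m"
  shows "(\<Sum>i\<in>UNIV. column i W \<bullet> (pseudo_inverse (W ** transpose W) *v column i W)) = real (rank W)"
  unfolding sum_column_quadratic_forms pseudo_inverse_symmetric(2)[OF transpose_gram_matrix]
    rank_gram_matrix ..

lemma markov_weighted_defect:
  fixes l D :: "'i::finite \<Rightarrow> real"
  assumes D_pos: "\<And>i. 0 < D i" and D_le: "\<And>i. D i \<le> l i"
  shows "\<tau> * (\<Sum>i\<in>{i. 1 - D i / l i \<ge> \<tau>}. l i) \<le> (\<Sum>i\<in>UNIV. l i) - (\<Sum>i\<in>UNIV. D i)"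
proof -
  define \<sigma> where "\<sigma> i = 1 - D i / l i" for i
  have l_pos: "0 < l i" for i
    using D_pos[of i] D_le[of i] by linarith
  have l_\<sigma>: "l i * \<sigma> i = l i - D i" for i
    using l_pos[of i] by (simp add: \<sigma>_def field_simps)
  have "\<tau> * (\<Sum>i\<in>{i. \<sigma> i \<ge> \<tau>}. l i) = (\<Sum>i\<in>{i. \<sigma> i \<ge> \<tau>}. l i * \<tau>)"
    by (simp add: sum_distrib_left mult.commute)
  also have "\<dots> \<le> (\<Sum>i\<in>{i. \<sigma> i \<ge> \<tau>}. l i * \<sigma> i)"
    using l_pos by (intro sum_mono mult_left_mono) (auto intro: less_imp_le)
  also have "\<dots> \<le> (\<Sum>i\<in>UNIV. l i * \<sigma> i)"
    using D_le by (intro sum_mono2) (auto simp: l_\<sigma>)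
  also have "\<dots> = (\<Sum>i\<in>UNIV. l i) - (\<Sum>i\<in>UNIV. D i)"
    by (simp add: l_\<sigma> sum_subtractf)
  finally show ?thesis by (simp add: \<sigma>_def)
qed

theorem mainTheorem18:
  fixes W :: "real^'n^'m" and \<epsilon> \<tau> :: real
  assumes nonzero: "\<And>i. column i W \<noteq> 0"
    and rank_pos: "rank W \<ge> 1"
    and hyp: "(\<Sum>i\<in>UNIV. norm (column i W) ^ 4 / (column i W \<bullet> ((W ** transpose W) *v column i W)))
              \<ge> (1 - \<epsilon>) * real (rank W)"
    and tau: "0 < \<tau>" "\<tau> < 1"
  shows "(let F = W ** transpose W;
              lev = (\<lambda>i. column i W \<bullet> (pseudo_inverse F *v column i W));
              D = (\<lambda>i. norm (column i W) ^ 4 / (column i W \<bullet> (F *v column i W)));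
              \<sigma> = (\<lambda>i. 1 - D i / lev i)
          in (1 / real (rank W)) * (\<Sum>i\<in>{i. \<sigma> i \<ge> \<tau>}. lev i) \<le> \<epsilon> / \<tau>)"
proof -
  define F where "F = W ** transpose W"
  define lev where "lev i = column i W \<bullet> (pseudo_inverse F *v column i W)" for i
  define D where "D i = norm (column i W) ^ 4 / (column i W \<bullet> (F *v column i W))" for i
  have D_pos: "0 < D i" and D_le: "D i \<le> lev i" for i
    using gram_defect_bounds[OF gram_pseudo_inverse_cancel_column nonzero[of i]]
    unfolding D_def lev_def F_def by simp_all
  have "\<tau> * (\<Sum>i\<in>{i. 1 - D i / lev i \<ge> \<tau>}. lev i) \<le> \<epsilon> * real (rank W)"
    using markov_weighted_defect[of D lev \<tau>, OF D_pos D_le] sum_leverage_scores[of W] hyp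
    by (simp add: D_def lev_def F_def algebra_simps)
  then have "(1 / real (rank W)) * (\<Sum>i\<in>{i. 1 - D i / lev i \<ge> \<tau>}. lev i) \<le> \<epsilon> / \<tau>"
    using rank_pos tau by (simp add: field_simps)
  then show ?thesis
    by (simp add: Let_def F_def lev_def D_def)
qed

end
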